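(* Let $n,k \in \mathbb{N}$ with $n \geq k$, and let $c_{n,k}$ be the smallest positive integer such that $c_{n,k} P^{(k)} \in E_n$ for every $P \in E_n$. Then $$c_{n,k} = \mathrm{lcm}\{d_{m,k} : k \leq m \leq n\}.$$ In particular, $c_{n,k}$ divides $q_{n,k}$.
   Context: For $n \in \mathbb{N}$, $E_n$ denotes the set of polynomials $P \in \mathbb{C}[X]$ of degree $\leq n$ (including the zero polynomial) such that $P(\mathbb{Z}) \subset \mathbb{Z}$. $P^{(k)}$ is the $k$-th derivative of $P$. For $n,k \in \mathbb{N}$ with $n \geq k$, define $$F_{n,k} = \sum_{\substack{i_1,\dots,i_k \in \mathbb{N}^* \\ i_1+\dots+i_k = n}} \frac{1}{i_1 i_2 \cdots i_k},$$ with the conventions $F_{0,0}=1$ and $F_{n,0}=0$ for $n \geq 1$; and $d_{n,k}$ is the denominator of the rational number $F_{n,k}$, i.e. the smallest positive integer $d$ with $dF_{n,k} \in \mathbb{Z}$. For $n,k \in \mathbb{N}$ with $n \geq k$, define $$q_{n,k} = \mathrm{lcm}\{i_1 i_2 \cdots i_k : i_1,\dots,i_k \in \mathbb{N}^*,\ i_1+\dots+i_k \leq n\},$$ with the convention $q_{n,0} = 1$. Here $\mathbb{N}^*$ denotes the positive integers. *)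

theory Defs
  imports Complex_Main "HOL-Computational_Algebra.Polynomial"
begin

text \<open>E_n: complex polynomials of degree at most n mapping the integers into the integers
  (the zero polynomial has degree 0, so it is included).\<close>
definition E :: "nat \<Rightarrow> complex poly set" where
  "E n = {P. degree P \<le> n \<and> (\<forall>z::int. poly P (of_int z) \<in> \<int>)}"

definition comps :: "nat \<Rightarrow> nat \<Rightarrow> nat list set" where
  "comps n k = {is. length is = k \<and> (\<forall>i\<in>set is. 0 < i) \<and> sum_list is = n}"

text \<open>F_{n,k}; the conventions F_{0,0}=1 and F_{n,0}=0 (n>=1) are automatic
  (the empty list is the unique composition of 0 into 0 parts).\<close>
definition F :: "nat \<Rightarrow> nat \<Rightarrow> rat" where
  "F n k = (\<Sum>is\<in>comps n k. 1 / of_nat (prod_list is))"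

definition d :: "nat \<Rightarrow> nat \<Rightarrow> nat" where
  "d n k = (LEAST d::nat. 0 < d \<and> of_nat d * F n k \<in> \<int>)"

text \<open>q_{n,k}; the convention q_{n,0}=1 is automatic (Lcm {1} = 1).\<close>
definition q :: "nat \<Rightarrow> nat \<Rightarrow> nat" where
  "q n k = Lcm {prod_list is | is. length is = k \<and> (\<forall>i\<in>set is. 0 < i) \<and> sum_list is \<le> n}"

definition c :: "nat \<Rightarrow> nat \<Rightarrow> nat" where
  "c n k = (LEAST c::nat. 0 < c \<and> (\<forall>P\<in>E n. smult (of_nat c) ((pderiv ^^ k) P) \<in> E n))"

end

theory Submission
  imports Defs
begin

text \<open>Write \<open>\<Delta>\<close> for the forward difference \<open>\<Delta>Q(x) = Q(x + 1) - Q(x)\<close>. On polynomials of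
  bounded degree Taylor's formula gives \<open>D = log (1 + \<Delta>) = \<Sum>i\<ge>1. (-1)^(i-1) \<Delta>^i / i\<close>, hence
  \<open>D^k = \<Sum>j. (-1)^(j-k) F_{j,k} \<Delta>^j\<close>: each composition of \<open>j\<close> into \<open>k\<close> parts contributes one
  term. As \<open>\<Delta>\<close> preserves integer-valuedness, \<open>L P^(k) \<in> E_n\<close> for all \<open>P \<in> E_n\<close> once
  \<open>d_{j,k}\<close> divides \<open>L\<close> for \<open>k \<le> j \<le> n\<close>. Conversely, for the binomial polynomial
  \<open>x choose m \<in> E_n\<close> only the term \<open>j = m\<close> survives at \<open>x = 0\<close>, which forces \<open>d_{m,k}\<close> to
  divide \<open>L\<close>. Finally \<open>q_{n,k} F_{m,k}\<close> is a sum of integers for \<open>m \<le> n\<close>.\<close>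

section \<open>Forward differences\<close>

definition fwd_diff :: "'a::comm_ring_1 poly \<Rightarrow> 'a poly" where
  "fwd_diff Q = pcompose Q [:1, 1:] - Q"

lemma poly_fwd_diff: "poly (fwd_diff Q) x = poly Q (x + 1) - poly Q x"
  by (simp add: fwd_diff_def poly_pcompose add.commute)

lemma fwd_diff_add: "fwd_diff (P + Q) = fwd_diff P + fwd_diff Q"
  by (simp add: fwd_diff_def pcompose_add)

lemma fwd_diff_smult: "fwd_diff (smult a Q) = smult a (fwd_diff Q)"
  by (simp add: fwd_diff_def pcompose_smult smult_diff_right)

lemma fwd_diff_const: "degree Q = 0 \<Longrightarrow> fwd_diff Q = 0"
  by (elim degree_eq_zeroE) (simp add: fwd_diff_def)

lemma higher_fwd_diff_0 [simp]: "(fwd_diff ^^ m) 0 = 0"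
  by (induction m) (simp_all add: fwd_diff_const)

lemma higher_fwd_diff_add: "(fwd_diff ^^ m) (P + Q) = (fwd_diff ^^ m) P + (fwd_diff ^^ m) Q"
  by (induction m) (simp_all add: fwd_diff_add)

lemma higher_fwd_diff_smult: "(fwd_diff ^^ m) (smult a Q) = smult a ((fwd_diff ^^ m) Q)"
  by (induction m) (simp_all add: fwd_diff_smult)

lemma fwd_diff_pcompose_shift:
  fixes Q :: "'a::{idom,ring_char_0} poly"
  shows "fwd_diff (pcompose Q [:x, 1:]) = pcompose (fwd_diff Q) [:x, 1:]"
  by (rule poly_ext) (simp add: poly_fwd_diff poly_pcompose add_ac)

lemma higher_fwd_diff_pcompose_shift:
  fixes Q :: "'a::{idom,ring_char_0} poly"
  shows "(fwd_diff ^^ m) (pcompose Q [:x, 1:]) = pcompose ((fwd_diff ^^ m) Q) [:x, 1:]"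
  by (induction m) (simp_all add: fwd_diff_pcompose_shift)

lemma degree_fwd_diff_less:
  fixes Q :: "'a::idom poly"
  assumes "degree Q > 0"
  shows "degree (fwd_diff Q) < degree Q"
proof -
  let ?R = "pcompose Q [:1, 1:]"
  have "degree ?R = degree Q" and "lead_coeff ?R = lead_coeff Q"
    using lead_coeff_comp[of "[:1, 1:]" Q] by (simp_all add: degree_pcompose)
  then have le: "degree (fwd_diff Q) \<le> degree Q" and top_coeff: "coeff (fwd_diff Q) (degree Q) = 0"
    unfolding fwd_diff_def using degree_diff_le[of ?R "degree Q" Q] by simp_all
  have "degree (fwd_diff Q) \<noteq> degree Q"
  proof
    assume eq: "degree (fwd_diff Q) = degree Q"
    with top_coeff have "fwd_diff Q = 0"
      using leading_coeff_0_iff[of "fwd_diff Q"] by simp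
    with eq assms show False by simp
  qed
  with le show ?thesis by simp
qed

lemma degree_fwd_diff_le: "degree (fwd_diff (Q :: 'a::idom poly)) \<le> degree Q"
  by (cases "degree Q = 0") (auto simp: fwd_diff_const dest: degree_fwd_diff_less[of Q])

lemma degree_higher_fwd_diff_le: "degree ((fwd_diff ^^ m) (Q :: 'a::idom poly)) \<le> degree Q"
  by (induction m) (auto intro: order.trans[OF degree_fwd_diff_le])

lemma higher_fwd_diff_eq_0:
  fixes Q :: "'a::idom poly"
  shows "degree Q < m \<Longrightarrow> (fwd_diff ^^ m) Q = 0"
proof (induction m arbitrary: Q)
  case (Suc m)
  have "(fwd_diff ^^ Suc m) Q = (fwd_diff ^^ m) (fwd_diff Q)"
    by (simp only: funpow_Suc_right o_apply)
  moreover have "degree Q = 0 \<or> degree (fwd_diff Q) < m"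
    using degree_fwd_diff_less[of Q] Suc.prems by linarith
  ultimately show ?case
    using Suc.IH by (auto simp: fwd_diff_const)
qed simp

definition int_valued :: "'a::comm_ring_1 poly \<Rightarrow> bool" where
  "int_valued Q \<longleftrightarrow> (\<forall>z::int. poly Q (of_int z) \<in> \<int>)"

lemma poly_of_int_add_1: "poly Q (of_int z + 1) = poly Q (of_int (z + 1))"
  by simp

lemma int_valued_fwd_diff: "int_valued Q \<Longrightarrow> int_valued (fwd_diff Q)"
  unfolding int_valued_def poly_fwd_diff poly_of_int_add_1 by (blast intro: Ints_diff)

lemma int_valued_higher_fwd_diff: "int_valued Q \<Longrightarrow> int_valued ((fwd_diff ^^ m) Q)"
  by (induction m) (simp_all add: int_valued_fwd_diff)

lemma int_valued_if_fwd_diff: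
  assumes "poly Q 0 \<in> \<int>" and "int_valued (fwd_diff Q)"
  shows "int_valued Q"
  unfolding int_valued_def
proof
  fix z :: int
  have step: "poly Q (of_int (i + 1)) - poly Q (of_int i) \<in> \<int>" for i
    using assms(2) unfolding int_valued_def by (simp only: poly_fwd_diff poly_of_int_add_1)
  show "poly Q (of_int z) \<in> \<int>"
  proof (induction z rule: int_induct[where k = 0])
    case (step1 i)
    then show ?case
      using Ints_add[OF step[of i]] by simp
  next
    case (step2 i)
    then show ?case
      using Ints_diff[OF _ step[of "i - 1"]] by simp
  qed (use assms(1) in simp)
qed

section \<open>Binomial polynomials and the Newton expansion\<close>

fun binom_poly :: "nat \<Rightarrow> 'a::field_char_0 poly" where
  "binom_poly 0 = 1"
| "binom_poly (Suc j) = smult (1 / of_nat (Suc j)) (binom_poly j * [:- of_nat j, 1:])"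

declare binom_poly.simps(2) [simp del]

lemma poly_binom_poly: "poly (binom_poly j) x = x gchoose j"
proof (induction j)
  case (Suc j)
  have "x gchoose (Suc j) = (x gchoose j) * (x - of_nat j) / of_nat (Suc j)"
    using gbinomial_mult_1[of x j] by (simp add: field_simps del: of_nat_Suc)
  with Suc show ?case
    by (simp add: binom_poly.simps(2) field_simps del: of_nat_Suc)
qed simp

lemma poly_binom_poly_0: "poly (binom_poly j) 0 = (if j = 0 then 1 else 0)"
  by (simp add: poly_binom_poly gbinomial_0_left)

lemma binom_poly_neq_0 [simp]: "binom_poly j \<noteq> 0"
proof
  assume "binom_poly j = (0 :: 'a poly)"
  then have "poly (binom_poly j) (of_nat j) = (0 :: 'a)"
    by simp
  then show False
    by (simp add: poly_binom_poly flip: binomial_gbinomial)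
qed

lemma degree_binom_poly [simp]: "degree (binom_poly j) = j"
proof (induction j)
  case (Suc j)
  then show ?case
    by (simp add: binom_poly.simps(2) degree_mult_eq del: mult_pCons_right of_nat_Suc)
qed simp

lemma fwd_diff_binom_poly_Suc: "fwd_diff (binom_poly (Suc j)) = binom_poly j"
  by (rule poly_ext) (simp only: poly_fwd_diff poly_binom_poly gbinomial_Suc_Suc add_diff_cancel)

lemma higher_fwd_diff_binom_poly:
  "(fwd_diff ^^ m) (binom_poly j) = (if m \<le> j then binom_poly (j - m) else (0 :: 'a::field_char_0 poly))"
proof (induction m arbitrary: j)
  case (Suc m)
  have "(fwd_diff ^^ Suc m) (binom_poly j) = (fwd_diff ^^ m) (fwd_diff (binom_poly j))"
    by (simp only: funpow_Suc_right o_apply)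
  also have "\<dots> = (if Suc m \<le> j then binom_poly (j - Suc m) else (0 :: 'a poly))"
    by (cases j) (simp_all add: Suc.IH fwd_diff_const fwd_diff_binom_poly_Suc)
  finally show ?case .
qed simp

lemma int_valued_binom_poly: "int_valued (binom_poly j)"
proof (induction j)
  case 0
  show ?case by (simp add: int_valued_def)
next
  case (Suc j)
  show ?case
    by (rule int_valued_if_fwd_diff) (simp_all add: Suc.IH poly_binom_poly_0 fwd_diff_binom_poly_Suc)
qed

text \<open>The Taylor coefficients of \<open>log (1 + x)\<close>.\<close>
definition log_coeff :: "nat \<Rightarrow> 'a::field_char_0" where
  "log_coeff i = (if i = 0 then 0 else (-1) ^ (i - 1) / of_nat i)"

lemma poly_pderiv_binom_poly_0: "poly (pderiv (binom_poly j)) 0 = (log_coeff j :: 'a::field_char_0)"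
proof (induction j)
  case 0
  show ?case by (simp add: log_coeff_def)
next
  case (Suc j)
  have "poly (pderiv (binom_poly (Suc j))) 0
      = (poly (binom_poly j) 0 - of_nat j * poly (pderiv (binom_poly j)) 0) / (of_nat (Suc j) :: 'a)"
    by (simp add: binom_poly.simps(2) pderiv_smult pderiv_mult pderiv_pCons
        del: of_nat_Suc mult_pCons_right)
  also have "\<dots> = (poly (binom_poly j) 0 - of_nat j * log_coeff j) / of_nat (Suc j)"
    using Suc.IH by simp
  also have "\<dots> = log_coeff (Suc j)"
    by (cases j) (simp_all add: poly_binom_poly_0 log_coeff_def del: of_nat_Suc)
  finally show ?case .
qed

lemma newton_expansion:
  fixes Q :: "'a::field_char_0 poly"
  assumes "degree Q \<le> N"
  shows "Q = (\<Sum>j\<le>N. smult (poly ((fwd_diff ^^ j) Q) 0) (binom_poly j))"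
  using assms
proof (induction N arbitrary: Q)
  case 0
  then show ?case
    by (auto elim: degree_eq_zeroE)
next
  case (Suc N)
  define a where "a = coeff Q (Suc N) / lead_coeff (binom_poly (Suc N) :: 'a poly)"
  define R where "R = Q - smult a (binom_poly (Suc N))"
  have "coeff (binom_poly (Suc N) :: 'a poly) (Suc N) \<noteq> 0"
    using leading_coeff_neq_0[of "binom_poly (Suc N) :: 'a poly"] by simp
  then have "degree R \<le> Suc N" and "coeff R (Suc N) = 0"
    unfolding R_def a_def using Suc.prems by (auto intro!: degree_diff_le)
  then have R: "degree R \<le> N"
    using leading_coeff_0_iff[of R] by (cases "degree R = Suc N") auto
  have Q: "Q = R + smult a (binom_poly (Suc N))"
    by (simp add: R_def)
  have diffs: "poly ((fwd_diff ^^ j) Q) 0 = poly ((fwd_diff ^^ j) R) 0 + (if j = Suc N then a else 0)"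
    if "j \<le> Suc N" for j
    using that by (subst Q) (simp add: higher_fwd_diff_add higher_fwd_diff_smult
        higher_fwd_diff_binom_poly poly_binom_poly_0)
  have "(\<Sum>j\<le>Suc N. smult (poly ((fwd_diff ^^ j) Q) 0) (binom_poly j))
      = (\<Sum>j\<le>Suc N. smult (poly ((fwd_diff ^^ j) R) 0) (binom_poly j)
          + (if j = Suc N then smult a (binom_poly j) else 0))"
    by (rule sum.cong) (simp_all add: diffs smult_add_left)
  also have "\<dots> = (\<Sum>j\<le>Suc N. smult (poly ((fwd_diff ^^ j) R) 0) (binom_poly j))
      + smult a (binom_poly (Suc N))"
    by (simp only: sum.distrib sum.delta finite_atMost atMost_iff order_refl if_True)
  also have "\<dots> = R + smult a (binom_poly (Suc N))"
    using Suc.IH[OF R] higher_fwd_diff_eq_0[of R "Suc N"] R by simp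
  finally show ?case
    using Q by simp
qed

lemma poly_pderiv_0_eq_log_series:
  fixes Q :: "'a::field_char_0 poly"
  assumes "degree Q \<le> N"
  shows "poly (pderiv Q) 0 = (\<Sum>i\<le>N. log_coeff i * poly ((fwd_diff ^^ i) Q) 0)"
proof -
  have "pderiv Q = (\<Sum>j\<le>N. smult (poly ((fwd_diff ^^ j) Q) 0) (pderiv (binom_poly j)))"
    by (subst newton_expansion[OF assms]) (simp add: higher_pderiv_sum[of 1, simplified] pderiv_smult)
  then show ?thesis
    by (simp add: poly_sum poly_pderiv_binom_poly_0 mult.commute)
qed

text \<open>The value at \<open>x\<close> is the value at \<open>0\<close> of the shifted polynomial \<open>Q(x + _)\<close>.\<close>
lemma pderiv_eq_log_series:
  fixes Q :: "'a::field_char_0 poly"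
  assumes "degree Q \<le> N"
  shows "pderiv Q = (\<Sum>i\<le>N. smult (log_coeff i) ((fwd_diff ^^ i) Q))"
proof (rule poly_ext)
  fix x :: 'a
  let ?Qx = "pcompose Q [:x, 1:]"
  have "degree ?Qx \<le> N"
    using assms by (simp add: degree_pcompose)
  moreover have "pderiv ?Qx = pcompose (pderiv Q) [:x, 1:]"
    by (simp add: pderiv_pcompose pderiv_pCons)
  ultimately show "poly (pderiv Q) x = poly (\<Sum>i\<le>N. smult (log_coeff i) ((fwd_diff ^^ i) Q)) x"
    using poly_pderiv_0_eq_log_series[of ?Qx N]
    by (simp add: higher_fwd_diff_pcompose_shift poly_pcompose poly_sum)
qed

section \<open>Higher derivatives in terms of forward differences\<close>

lemma length_le_sum_list: "\<forall>i\<in>set ns. 0 < i \<Longrightarrow> length ns \<le> sum_list (ns :: nat list)"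
  by (induction ns) auto

lemma finite_comps: "finite (comps j k)"
proof (rule finite_subset)
  show "comps j k \<subseteq> {ns. set ns \<subseteq> {0..j} \<and> length ns = k}"
    unfolding comps_def using member_le_sum_list by fastforce
qed (simp add: finite_lists_length_eq)

lemma comps_0: "comps j 0 = (if j = 0 then {[]} else {})"
  unfolding comps_def by auto

lemma comps_eq_empty: "j < k \<Longrightarrow> comps j k = {}"
  unfolding comps_def using length_le_sum_list by fastforce

lemma comps_Suc: "comps j (Suc k) = (\<lambda>(i, ns). i # ns) ` (SIGMA i:{1..j}. comps (j - i) k)"
proof (intro set_eqI iffI)
  fix ns
  assume "ns \<in> comps j (Suc k)"
  then obtain i ms where "ns = i # ms" "i \<in> {1..j}" "ms \<in> comps (j - i) k"
    unfolding comps_def by (cases ns) auto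
  then show "ns \<in> (\<lambda>(i, ns). i # ns) ` (SIGMA i:{1..j}. comps (j - i) k)"
    by force
qed (auto simp: comps_def)

lemma F_eq_0: "j < k \<Longrightarrow> F j k = 0"
  by (simp add: F_def comps_eq_empty)

text \<open>The coefficient of \<open>fwd_diff ^^ j\<close> in \<open>log (1 + fwd_diff) ^ k\<close>.\<close>
definition deriv_coeff :: "nat \<Rightarrow> nat \<Rightarrow> 'a::field_char_0" where
  "deriv_coeff j k = (\<Sum>ns\<in>comps j k. prod_list (map log_coeff ns))"

lemma deriv_coeff_0: "deriv_coeff j 0 = (if j = 0 then 1 else 0)"
  by (simp add: deriv_coeff_def comps_0)

lemma deriv_coeff_Suc: "deriv_coeff j (Suc k) = (\<Sum>i\<le>j. log_coeff i * deriv_coeff (j - i) k)"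
proof -
  have "inj_on (\<lambda>(i, ns). i # ns) (SIGMA i:{1..j}. comps (j - i) k)"
    by (auto simp: inj_on_def)
  then have "deriv_coeff j (Suc k)
      = (\<Sum>(i, ns)\<in>(SIGMA i:{1..j}. comps (j - i) k). log_coeff i * prod_list (map log_coeff ns))"
    by (simp add: deriv_coeff_def comps_Suc sum.reindex case_prod_unfold)
  also have "\<dots> = (\<Sum>i\<in>{1..j}. log_coeff i * deriv_coeff (j - i) k)"
    by (simp add: sum.Sigma[symmetric] finite_comps deriv_coeff_def sum_distrib_left)
  also have "\<dots> = (\<Sum>i\<le>j. log_coeff i * deriv_coeff (j - i) k)"
    by (rule sum.mono_neutral_left) (auto simp: log_coeff_def)
  finally show ?thesis .
qed

lemma prod_list_log_coeff:
  "\<forall>i\<in>set ns. 0 < i \<Longrightarrow>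
    prod_list (map log_coeff ns) = (-1) ^ (sum_list ns - length ns) / of_nat (prod_list ns)"
proof (induction ns)
  case (Cons i ns)
  then have i: "0 < i" and IH: "prod_list (map log_coeff ns)
      = ((-1) ^ (sum_list ns - length ns) / of_nat (prod_list ns) :: 'a)"
    by simp_all
  have "prod_list (map log_coeff (i # ns)) = log_coeff i * (prod_list (map log_coeff ns) :: 'a)"
    by simp
  also have "\<dots> = ((-1) ^ (i - 1) / of_nat i) * ((-1) ^ (sum_list ns - length ns) / of_nat (prod_list ns))"
    using i by (simp only: IH) (simp add: log_coeff_def)
  also have "\<dots> = (-1) ^ (i - 1 + (sum_list ns - length ns)) / of_nat (prod_list (i # ns))"
    by (simp add: power_add)
  also have "i - 1 + (sum_list ns - length ns) = sum_list (i # ns) - length (i # ns)"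
    using i length_le_sum_list[of ns] Cons.prems by simp
  finally show ?case .
qed simp

lemma deriv_coeff_eq_F: "deriv_coeff j k = (-1) ^ (j - k) * of_rat (F j k)"
proof -
  have "deriv_coeff j k = (\<Sum>ns\<in>comps j k. (-1) ^ (j - k) * (1 / of_nat (prod_list ns)))"
    unfolding deriv_coeff_def by (rule sum.cong) (auto simp: comps_def prod_list_log_coeff)
  then show ?thesis
    by (simp add: F_def of_rat_sum of_rat_divide sum_distrib_left)
qed

lemma smult_sum_right: "smult a (\<Sum>i\<in>A. f i) = (\<Sum>i\<in>A. smult a (f i))"
  by (induction A rule: infinite_finite_induct) (simp_all add: smult_add_right)

lemma pderiv_sum_higher_fwd_diff:
  fixes Q :: "'a::field_char_0 poly"
  assumes "degree Q \<le> N"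
  shows "pderiv (\<Sum>m\<le>N. smult (a m) ((fwd_diff ^^ m) Q))
    = (\<Sum>j\<le>N. smult (\<Sum>i\<le>j. log_coeff i * a (j - i)) ((fwd_diff ^^ j) Q))"
proof -
  define h where "h i m = smult (log_coeff i * a m) ((fwd_diff ^^ (i + m)) Q)" for i m
  have "pderiv (\<Sum>m\<le>N. smult (a m) ((fwd_diff ^^ m) Q)) = (\<Sum>m\<le>N. \<Sum>i\<le>N. h i m)"
  proof -
    have "pderiv ((fwd_diff ^^ m) Q) = (\<Sum>i\<le>N. smult (log_coeff i) ((fwd_diff ^^ (i + m)) Q))" for m
      using pderiv_eq_log_series[OF order.trans[OF degree_higher_fwd_diff_le assms], of m]
      by (simp add: funpow_add)
    then show ?thesis
      by (simp add: higher_pderiv_sum[of 1, simplified] pderiv_smult smult_sum_right h_def mult.commute)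
  qed
  also have "\<dots> = (\<Sum>i\<le>N. \<Sum>m\<le>N. h i m)"
    by (rule sum.swap)
  also have "\<dots> = (\<Sum>(i, m)\<in>{..N} \<times> {..N}. h i m)"
    by (simp only: sum.cartesian_product)
  also have "\<dots> = (\<Sum>(i, m)\<in>{(i, m). i + m \<le> N}. h i m)"
  proof (rule sum.mono_neutral_right)
    have "h i m = 0" if "N < i + m" for i m
      using that assms by (simp add: h_def higher_fwd_diff_eq_0)
    then show "\<forall>x\<in>{..N} \<times> {..N} - {(i, m). i + m \<le> N}. (case x of (i, m) \<Rightarrow> h i m) = 0"
      using leI by fastforce
  qed auto
  also have "\<dots> = (\<Sum>j\<le>N. \<Sum>i\<le>j. h i (j - i))"
    by (rule sum.triangle_reindex_eq)
  also have "\<dots> = (\<Sum>j\<le>N. smult (\<Sum>i\<le>j. log_coeff i * a (j - i)) ((fwd_diff ^^ j) Q))"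
    by (simp add: h_def smult_sum)
  finally show ?thesis .
qed

lemma higher_pderiv_eq_sum_higher_fwd_diff:
  fixes Q :: "'a::field_char_0 poly"
  assumes "degree Q \<le> N"
  shows "(pderiv ^^ k) Q = (\<Sum>j\<le>N. smult (deriv_coeff j k) ((fwd_diff ^^ j) Q))"
proof (induction k)
  case 0
  have "(\<Sum>j\<le>N. smult (deriv_coeff j 0) ((fwd_diff ^^ j) Q)) = (\<Sum>j\<le>N. if j = 0 then Q else 0)"
    by (rule sum.cong) (simp_all add: deriv_coeff_0)
  then show ?case
    by simp
next
  case (Suc k)
  then show ?case
    by (simp add: pderiv_sum_higher_fwd_diff[OF assms] deriv_coeff_Suc)
qed

section \<open>Denominators and integer-valued derivatives\<close>

lemma ex_pos_nat_mult_in_Ints: "\<exists>x::nat. 0 < x \<and> of_nat x * (r :: rat) \<in> \<int>"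
proof -
  obtain a b where "quotient_of r = (a, b)"
    by (cases "quotient_of r")
  then have "b > 0" and "r = of_int a / of_int b"
    by (simp_all add: quotient_of_denom_pos quotient_of_div)
  then have "0 < nat b \<and> of_nat (nat b) * r \<in> \<int>"
    by simp
  then show ?thesis ..
qed

lemma d_pos: "0 < d m k"
  unfolding d_def using LeastI_ex[OF ex_pos_nat_mult_in_Ints] by blast

lemma d_mult_F_in_Ints: "of_nat (d m k) * F m k \<in> \<int>"
  unfolding d_def using LeastI_ex[OF ex_pos_nat_mult_in_Ints] by blast

lemma mult_F_in_Ints_iff: "of_nat x * F m k \<in> \<int> \<longleftrightarrow> d m k dvd x"
proof
  assume x: "of_nat x * F m k \<in> \<int>"
  define r where "r = x mod d m k"
  have "(of_nat x :: rat) = of_nat (x div d m k) * of_nat (d m k) + of_nat r"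
    unfolding r_def by (simp only: div_mult_mod_eq flip: of_nat_mult of_nat_add)
  then have "of_nat r * F m k = of_nat x * F m k - of_nat (x div d m k) * (of_nat (d m k) * F m k)"
    by (simp add: algebra_simps)
  also have "\<dots> \<in> \<int>"
    using x Ints_mult[OF Ints_of_nat d_mult_F_in_Ints] by (rule Ints_diff)
  finally have "of_nat r * F m k \<in> \<int>" .
  moreover have "r < d m k"
    unfolding r_def using d_pos[of m k] by simp
  ultimately have "r = 0"
    using not_less_Least[of r "\<lambda>d. 0 < d \<and> of_nat d * F m k \<in> \<int>"] by (simp add: d_def)
  then show "d m k dvd x"
    by (simp add: r_def mod_eq_0_iff_dvd)
next
  assume "d m k dvd x"
  then obtain t where "x = d m k * t" ..
  then have "of_nat x * F m k = of_nat t * (of_nat (d m k) * F m k)"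
    by simp
  also have "\<dots> \<in> \<int>"
    by (rule Ints_mult[OF Ints_of_nat d_mult_F_in_Ints])
  finally show "of_nat x * F m k \<in> \<int>" .
qed

lemma of_rat_in_Ints_iff: "(of_rat r :: 'a::field_char_0) \<in> \<int> \<longleftrightarrow> r \<in> \<int>"
proof
  assume "(of_rat r :: 'a) \<in> \<int>"
  then obtain i where "(of_rat r :: 'a) = of_rat (of_int i)"
    by (auto elim: Ints_cases)
  then show "r \<in> \<int>"
    by (simp only: of_rat_eq_iff) simp
qed (auto elim: Ints_cases)

lemma neg_one_power_mult_in_Ints_iff:
  "((-1) ^ n * x :: 'a::ring_1) \<in> \<int> \<longleftrightarrow> x \<in> \<int>"
  by (cases "even n") simp_all

lemma mult_deriv_coeff_in_Ints_iff:
  "of_nat x * (deriv_coeff j k :: 'a::field_char_0) \<in> \<int> \<longleftrightarrow> d j k dvd x"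
proof -
  have "of_nat x * (deriv_coeff j k :: 'a) = (-1) ^ (j - k) * of_rat (of_nat x * F j k)"
    by (simp add: deriv_coeff_eq_F of_rat_mult mult.left_commute)
  then show ?thesis
    by (simp add: neg_one_power_mult_in_Ints_iff of_rat_in_Ints_iff mult_F_in_Ints_iff)
qed

lemma E_iff: "P \<in> E n \<longleftrightarrow> degree P \<le> n \<and> int_valued P"
  by (simp add: E_def int_valued_def)

lemma smult_higher_pderiv_in_E:
  assumes L: "\<forall>m\<in>{k..n}. d m k dvd L" and P: "P \<in> E n"
  shows "smult (of_nat L) ((pderiv ^^ k) P) \<in> E n"
proof -
  have deg: "degree P \<le> n" and int: "int_valued P"
    using P by (simp_all add: E_iff)
  have "d j k dvd L" if "j \<le> n" for j
  proof (cases "k \<le> j")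
    case False
    then have "of_nat 1 * F j k \<in> \<int>"
      by (simp add: F_eq_0)
    then have "d j k dvd 1"
      by (simp only: mult_F_in_Ints_iff)
    then show ?thesis
      by (rule dvd_trans) simp
  qed (use L that in simp)
  then have coeffs: "of_nat L * (deriv_coeff j k :: complex) \<in> \<int>" if "j \<le> n" for j
    using that by (simp add: mult_deriv_coeff_in_Ints_iff)
  have "int_valued (smult (of_nat L) ((pderiv ^^ k) P))"
    unfolding int_valued_def
  proof
    fix z :: int
    have "poly (smult (of_nat L) ((pderiv ^^ k) P)) (of_int z)
        = (\<Sum>j\<le>n. (of_nat L * deriv_coeff j k) * poly ((fwd_diff ^^ j) P) (of_int z))"
      by (simp add: higher_pderiv_eq_sum_higher_fwd_diff[OF deg] poly_sum sum_distrib_left mult.assoc)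
    also have "\<dots> \<in> \<int>"
      using coeffs int_valued_higher_fwd_diff[OF int]
      by (intro Ints_sum Ints_mult[of "of_nat L * _"]) (simp_all add: int_valued_def)
    finally show "poly (smult (of_nat L) ((pderiv ^^ k) P)) (of_int z) \<in> \<int>" .
  qed
  moreover have "degree (smult (of_nat L) ((pderiv ^^ k) P)) \<le> n"
    using deg by (auto simp: degree_higher_pderiv)
  ultimately show ?thesis
    by (simp add: E_iff)
qed

text \<open>The binomial polynomial \<open>x choose m\<close> isolates the single coefficient
  \<open>deriv_coeff m k\<close> of the expansion at \<open>x = 0\<close>.\<close>
lemma d_dvd_if_smult_higher_pderiv_in_E:
  assumes L: "\<forall>P\<in>E n. smult (of_nat L) ((pderiv ^^ k) P) \<in> E n" and "m \<le> n"
  shows "d m k dvd L"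
proof -
  let ?B = "binom_poly m :: complex poly"
  have "?B \<in> E n"
    using \<open>m \<le> n\<close> by (simp add: E_iff int_valued_binom_poly)
  with L have "smult (of_nat L) ((pderiv ^^ k) ?B) \<in> E n"
    by blast
  then have "int_valued (smult (of_nat L) ((pderiv ^^ k) ?B))"
    by (simp add: E_iff)
  then have "of_nat L * poly ((pderiv ^^ k) ?B) 0 \<in> \<int>"
    unfolding int_valued_def by (metis poly_smult of_int_0)
  moreover have "poly ((pderiv ^^ k) ?B) 0 = (deriv_coeff m k :: complex)"
  proof -
    have "poly ((pderiv ^^ k) ?B) 0
        = (\<Sum>j\<le>m. deriv_coeff j k * poly ((fwd_diff ^^ j) ?B) (0 :: complex))"
      by (simp add: higher_pderiv_eq_sum_higher_fwd_diff[of _ m] poly_sum)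
    also have "\<dots> = (\<Sum>j\<le>m. if j = m then deriv_coeff j k else 0)"
      by (rule sum.cong) (simp_all add: higher_fwd_diff_binom_poly poly_binom_poly_0)
    finally show ?thesis
      by simp
  qed
  ultimately show ?thesis
    by (simp add: mult_deriv_coeff_in_Ints_iff)
qed

lemma smult_higher_pderiv_in_E_iff:
  "(\<forall>P\<in>E n. smult (of_nat L) ((pderiv ^^ k) P) \<in> E n) \<longleftrightarrow> (\<forall>m\<in>{k..n}. d m k dvd L)"
  using smult_higher_pderiv_in_E d_dvd_if_smult_higher_pderiv_in_E by auto

lemma d_dvd_q:
  assumes "m \<le> n"
  shows "d m k dvd q n k"
proof -
  have "of_nat (q n k) * F m k = (\<Sum>ns\<in>comps m k. of_nat (q n k) / of_nat (prod_list ns))"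
    by (simp add: F_def sum_distrib_left)
  also have "\<dots> \<in> \<int>"
  proof (rule Ints_sum)
    fix ns
    assume "ns \<in> comps m k"
    then have "prod_list ns dvd q n k"
      unfolding q_def using assms by (intro dvd_Lcm) (auto simp: comps_def)
    then show "of_nat (q n k) / of_nat (prod_list ns) \<in> (\<int> :: rat set)"
      using of_int_divide_in_Ints[of "int (prod_list ns)" "int (q n k)"] by simp
  qed
  finally show ?thesis
    by (simp add: mult_F_in_Ints_iff)
qed

lemma Least_pos_multiple: "0 < L \<Longrightarrow> (LEAST x::nat. 0 < x \<and> L dvd x) = L"
  by (rule Least_equality) (simp_all add: dvd_imp_le)

theorem theorem2:
  fixes n k :: nat
  assumes "k \<le> n"
  shows "c n k = Lcm ((\<lambda>m. d m k) ` {k..n}) \<and> c n k dvd q n k"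
proof -
  define L where "L = Lcm ((\<lambda>m. d m k) ` {k..n})"
  have "0 < L"
    unfolding L_def by (rule gr0I) (auto simp: Lcm_0_iff_nat d_pos[THEN less_not_refl2])
  have "c n k = (LEAST x. 0 < x \<and> L dvd x)"
    unfolding c_def smult_higher_pderiv_in_E_iff L_def Lcm_dvd_iff by simp
  also have "\<dots> = L"
    using \<open>0 < L\<close> by (rule Least_pos_multiple)
  finally have "c n k = L" .
  moreover have "L dvd q n k"
    unfolding L_def using d_dvd_q by (simp add: Lcm_dvd_iff)
  ultimately show ?thesis
    by (simp add: L_def)
qed

end
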